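(* Let $G$ be a simple directed graph and $\sigma$ a set of nodes with a simply-added split $\sigma=\tau\,\dot\cup\,\omega$ ($\omega$ simply-added onto $\tau$), where $\tau$ has uniform in-degree. If $\tau$ is not a stable motif, then $\sigma$ is not a stable motif (for a CTLN $W(G,\varepsilon,\delta)$ with legal parameters).
   Context: $\sigma=\tau\,\dot\cup\,\omega$ with $\tau,\omega$ nonempty and disjoint is a simply-added split ($\omega$ simply-added onto $\tau$) if for each $i\in\omega$, either $i\to j$ for every $j\in\tau$ or $i\to j$ for no $j\in\tau$ (no constraints on other edges). $\tau$ has uniform in-degree if all nodes of $G|_\tau$ have the same in-degree. Legal parameters: $\delta>0$, $0<\varepsilon<\frac{\delta}{\delta+1}$. $W$ has $W_{ii}=0$, $W_{ij}=-1+\varepsilon$ if $j\to i$, $W_{ij}=-1-\delta$ if $i\ne j$, $j\not\to i$; dynamics $\dot x_i=-x_i+[\sum_jW_{ij}x_j+\theta]_+$, $\theta>0$; nondegenerate. $W_\rho$ is the principal submatrix on $\rho$. $\rho$ is a stable motif if $\theta(I-W_\rho)^{-1}1_\rho$ has all entries positive and all eigenvalues of $I-W_\rho$ have positive real part. *)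

theory Defs
  imports "Jordan_Normal_Form.DL_Submatrix" "Jordan_Normal_Form.Char_Poly" "Jordan_Normal_Form.Determinant"
begin

text \<open>Graphs on the vertex set {0..<n}; E i j means the edge i -> j.\<close>

definition simple_digraph :: "nat \<Rightarrow> (nat \<Rightarrow> nat \<Rightarrow> bool) \<Rightarrow> bool" where
  "simple_digraph n E \<longleftrightarrow> (\<forall>i. \<not> E i i) \<and> (\<forall>i j. E i j \<longrightarrow> i < n \<and> j < n)"

definition legal_params :: "real \<Rightarrow> real \<Rightarrow> bool" where
  "legal_params \<epsilon> \<delta> \<longleftrightarrow> \<delta> > 0 \<and> 0 < \<epsilon> \<and> \<epsilon> < \<delta> / (\<delta> + 1)"

definition ctln_W :: "nat \<Rightarrow> (nat \<Rightarrow> nat \<Rightarrow> bool) \<Rightarrow> real \<Rightarrow> real \<Rightarrow> real mat" where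
  "ctln_W n E \<epsilon> \<delta> = mat n n (\<lambda>(i,j). if i = j then 0 else if E j i then -1 + \<epsilon> else -1 - \<delta>)"

text \<open>Principal submatrix W_rho (rows/columns indexed by rho in increasing order).\<close>
definition principal_sub :: "real mat \<Rightarrow> nat set \<Rightarrow> real mat" where
  "principal_sub W \<rho> = submatrix W \<rho> \<rho>"

definition I_minus_W :: "real mat \<Rightarrow> nat set \<Rightarrow> real mat" where
  "I_minus_W W \<rho> = 1\<^sub>m (dim_row (principal_sub W \<rho>)) - principal_sub W \<rho>"

definition mat_inv :: "real mat \<Rightarrow> real mat" where
  "mat_inv M = (SOME B. B \<in> carrier_mat (dim_row M) (dim_row M) \<and> inverts_mat M B \<and> inverts_mat B M)"

definition fp_vec :: "real mat \<Rightarrow> real \<Rightarrow> nat set \<Rightarrow> real vec" where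
  "fp_vec W \<theta> \<rho> = \<theta> \<cdot>\<^sub>v (mat_inv (I_minus_W W \<rho>) *\<^sub>v vec (dim_row (I_minus_W W \<rho>)) (\<lambda>_. 1))"

definition stable_motif :: "real mat \<Rightarrow> real \<Rightarrow> nat set \<Rightarrow> bool" where
  "stable_motif W \<theta> \<rho> \<longleftrightarrow>
     invertible_mat (I_minus_W W \<rho>) \<and>
     (\<forall>i < dim_vec (fp_vec W \<theta> \<rho>). fp_vec W \<theta> \<rho> $ i > 0) \<and>
     (\<forall>z. eigenvalue (map_mat complex_of_real (I_minus_W W \<rho>)) z \<longrightarrow> Re z > 0)"

definition fp_full :: "real mat \<Rightarrow> real \<Rightarrow> nat set \<Rightarrow> nat \<Rightarrow> real" where
  "fp_full W \<theta> \<sigma> j = (if j \<in> \<sigma> then fp_vec W \<theta> \<sigma> $ card {a \<in> \<sigma>. a < j} else 0)"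

definition s_val :: "real mat \<Rightarrow> real \<Rightarrow> nat set \<Rightarrow> nat \<Rightarrow> real" where
  "s_val W \<theta> \<sigma> k = (\<Sum>j\<in>\<sigma>. W $$ (k, j) * fp_full W \<theta> \<sigma> j) + \<theta>"

definition fp_support :: "nat \<Rightarrow> real mat \<Rightarrow> real \<Rightarrow> nat set \<Rightarrow> bool" where
  "fp_support n W \<theta> \<sigma> \<longleftrightarrow> \<sigma> \<noteq> {} \<and> \<sigma> \<subseteq> {0..<n} \<and> invertible_mat (I_minus_W W \<sigma>) \<and>
     (\<forall>j\<in>\<sigma>. fp_full W \<theta> \<sigma> j > 0) \<and> (\<forall>k\<in>{0..<n} - \<sigma>. s_val W \<theta> \<sigma> k \<le> 0)"

definition nondegenerate :: "nat \<Rightarrow> real mat \<Rightarrow> real \<Rightarrow> bool" where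
  "nondegenerate n W \<theta> \<longleftrightarrow>
     (\<forall>\<sigma>. \<sigma> \<subseteq> {0..<n} \<and> \<sigma> \<noteq> {} \<longrightarrow> det (I_minus_W W \<sigma>) \<noteq> 0) \<and>
     (\<forall>\<sigma>. fp_support n W \<theta> \<sigma> \<longrightarrow> (\<forall>k\<in>{0..<n} - \<sigma>. s_val W \<theta> \<sigma> k \<noteq> 0))"

definition simply_added :: "(nat \<Rightarrow> nat \<Rightarrow> bool) \<Rightarrow> nat set \<Rightarrow> nat set \<Rightarrow> bool" where
  "simply_added E \<omega> \<tau> \<longleftrightarrow> (\<forall>i\<in>\<omega>. (\<forall>j\<in>\<tau>. E i j) \<or> (\<forall>j\<in>\<tau>. \<not> E i j))"

definition uniform_in_degree :: "(nat \<Rightarrow> nat \<Rightarrow> bool) \<Rightarrow> nat set \<Rightarrow> bool" where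
  "uniform_in_degree E \<tau> \<longleftrightarrow> (\<exists>d. \<forall>i\<in>\<tau>. card {j\<in>\<tau>. E j i} = d)"

end

theory Submission
  imports Defs
begin

(* Uniform in-degree makes every row of I - W_tau sum to the same c > 0, so the all-ones vector
   is an eigenvector of I - W_tau for c and the fixed point theta (I - W_tau)^-1 1 = (theta/c) 1 is
   positive. Hence tau can only fail to be stable through an eigenvalue z with Re z <= 0, and a left
   eigenvector f for z is orthogonal to the all-ones vector because z ~= c. Since omega is simply
   added onto tau, every column of I - W_sigma indexed by omega is constant on the rows in tau, so
   f extended by zero is a left eigenvector of I - W_sigma for the same z. *)

lemma bij_betw_pick:
  assumes "finite S"
  shows "bij_betw (pick S) {0..<card S} S"
proof (rule bij_betw_imageI)
  show "inj_on (pick S) {0..<card S}"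
    unfolding inj_on_def by (metis atLeastLessThan_iff nat_neq_iff pick_mono)
  show "pick S ` {0..<card S} = S"
  proof
    show "pick S ` {0..<card S} \<subseteq> S" using pick_in_set by auto
    show "S \<subseteq> pick S ` {0..<card S}"
    proof
      fix a assume a: "a \<in> S"
      have "card {x\<in>S. x < a} < card S"
        using a assms by (intro psubset_card_mono) auto
      then show "a \<in> pick S ` {0..<card S}" using pick_card_in_set[OF a] by force
    qed
  qed
qed

lemma eigenvalue_transpose_mat:
  assumes "(A :: 'a :: field mat) \<in> carrier_mat n n"
  shows "eigenvalue (transpose_mat A) z \<longleftrightarrow> eigenvalue A z"
  using assms by (simp add: eigenvalue_root_char_poly[OF assms] eigenvalue_root_char_poly[of _ n])

lemma eigenvalue_iff_left_eigenvector:
  fixes A :: "'a :: field mat"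
  assumes "A \<in> carrier_mat k k"
  shows "eigenvalue A z \<longleftrightarrow>
    (\<exists>v \<in> carrier_vec k. v \<noteq> 0\<^sub>v k \<and> (\<forall>q<k. (\<Sum>p = 0..<k. v $ p * A $$ (p, q)) = z * v $ q))"
proof -
  have "transpose_mat A *\<^sub>v v = z \<cdot>\<^sub>v v \<longleftrightarrow> (\<forall>q<k. (\<Sum>p = 0..<k. v $ p * A $$ (p, q)) = z * v $ q)"
    if "v \<in> carrier_vec k" for v
    using assms that by (auto simp: vec_eq_iff mult_mat_vec_def scalar_prod_def mult.commute)
  moreover have "eigenvalue (transpose_mat A) z \<longleftrightarrow>
      (\<exists>v \<in> carrier_vec k. v \<noteq> 0\<^sub>v k \<and> transpose_mat A *\<^sub>v v = z \<cdot>\<^sub>v v)"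
    using assms unfolding eigenvalue_def eigenvector_def by auto
  ultimately show ?thesis
    using eigenvalue_transpose_mat[OF assms] by auto
qed

(* Left eigenvectors are indexed by nodes rather than by positions in a principal submatrix,
   so that a left eigenvector on tau can be extended by zero to tau \<union> omega. *)
definition left_eigenvector_on :: "'b set \<Rightarrow> ('b \<Rightarrow> 'b \<Rightarrow> 'a :: comm_ring_1) \<Rightarrow> 'a \<Rightarrow> ('b \<Rightarrow> 'a) \<Rightarrow> bool" where
  "left_eigenvector_on \<rho> M z f \<longleftrightarrow> (\<exists>a\<in>\<rho>. f a \<noteq> 0) \<and> (\<forall>b\<in>\<rho>. (\<Sum>a\<in>\<rho>. f a * M a b) = z * f b)"

lemma left_eigenvector_on_cong:
  assumes "\<And>a b. a \<in> \<rho> \<Longrightarrow> b \<in> \<rho> \<Longrightarrow> M a b = M' a b"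
  shows "left_eigenvector_on \<rho> M z f \<longleftrightarrow> left_eigenvector_on \<rho> M' z f"
  using assms unfolding left_eigenvector_on_def by (simp cong: sum.cong)

lemma submatrix_carrier_mat:
  assumes "M \<in> carrier_mat n n" "\<rho> \<subseteq> {0..<n}"
  shows "submatrix M \<rho> \<rho> \<in> carrier_mat (card \<rho>) (card \<rho>)"
proof -
  have \<rho>_eq: "{i. i < n \<and> i \<in> \<rho>} = \<rho>" using assms(2) by auto
  show ?thesis
  proof (rule carrier_matI)
    show "dim_row (submatrix M \<rho> \<rho>) = card \<rho>"
      unfolding dim_submatrix carrier_matD[OF assms(1)] \<rho>_eq ..
    show "dim_col (submatrix M \<rho> \<rho>) = card \<rho>"
      unfolding dim_submatrix carrier_matD[OF assms(1)] \<rho>_eq ..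
  qed
qed

lemma submatrix_index_pick:
  assumes "M \<in> carrier_mat n n" "\<rho> \<subseteq> {0..<n}" "p < card \<rho>" "q < card \<rho>"
  shows "submatrix M \<rho> \<rho> $$ (p, q) = M $$ (pick \<rho> p, pick \<rho> q)"
proof -
  have \<rho>_eq: "{i. i < n \<and> i \<in> \<rho>} = \<rho>" using assms(2) by auto
  show ?thesis
    using assms(3,4) by (intro submatrix_index) (simp_all only: carrier_matD[OF assms(1)] \<rho>_eq)
qed

lemma map_mat_submatrix:
  assumes "M \<in> carrier_mat n n" "\<rho> \<subseteq> {0..<n}"
  shows "map_mat f (submatrix M \<rho> \<rho>) = submatrix (map_mat f M) \<rho> \<rho>"
proof -
  have M': "map_mat f M \<in> carrier_mat n n" using assms(1) by simp
  have "pick \<rho> p < n" if "p < card \<rho>" for p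
    using that pick_in_set assms(2) by fastforce
  then show ?thesis
    using submatrix_carrier_mat[OF assms] submatrix_carrier_mat[OF M' assms(2)] assms
    by (intro eq_matI) (auto simp: submatrix_index_pick[OF assms] submatrix_index_pick[OF M' assms(2)])
qed

lemma submatrix_mult_ones_vec:
  fixes M :: "'a :: semiring_1 mat"
  assumes "M \<in> carrier_mat n n" "\<rho> \<subseteq> {0..<n}"
    and rows: "\<And>a. a \<in> \<rho> \<Longrightarrow> (\<Sum>b\<in>\<rho>. M $$ (a, b)) = c"
  shows "submatrix M \<rho> \<rho> *\<^sub>v vec (card \<rho>) (\<lambda>_. 1) = c \<cdot>\<^sub>v vec (card \<rho>) (\<lambda>_. 1)"
proof (rule eq_vecI)
  have sub: "submatrix M \<rho> \<rho> \<in> carrier_mat (card \<rho>) (card \<rho>)"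
    by (rule submatrix_carrier_mat[OF assms(1,2)])
  then show "dim_vec (submatrix M \<rho> \<rho> *\<^sub>v vec (card \<rho>) (\<lambda>_. 1)) = dim_vec (c \<cdot>\<^sub>v vec (card \<rho>) (\<lambda>_. 1))"
    by simp
  fix p assume "p < dim_vec (c \<cdot>\<^sub>v vec (card \<rho>) (\<lambda>_. 1))"
  then have p: "p < card \<rho>" by simp
  have bij: "bij_betw (pick \<rho>) {0..<card \<rho>} \<rho>"
    using bij_betw_pick[OF finite_subset[OF assms(2) finite_atLeastLessThan]] by simp
  have "(submatrix M \<rho> \<rho> *\<^sub>v vec (card \<rho>) (\<lambda>_. 1)) $ p = (\<Sum>q = 0..<card \<rho>. M $$ (pick \<rho> p, pick \<rho> q))"
    using sub p by (auto simp: mult_mat_vec_def scalar_prod_def submatrix_index_pick[OF assms(1,2)] intro!: sum.cong)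
  also have "\<dots> = (\<Sum>b\<in>\<rho>. M $$ (pick \<rho> p, b))"
    by (rule sum.reindex_bij_betw[OF bij])
  also have "\<dots> = c"
    using rows p pick_in_set by simp
  finally show "(submatrix M \<rho> \<rho> *\<^sub>v vec (card \<rho>) (\<lambda>_. 1)) $ p = (c \<cdot>\<^sub>v vec (card \<rho>) (\<lambda>_. 1)) $ p"
    using p by simp
qed

lemma left_eigenvector_on_iff_submatrix:
  fixes M :: "'a :: field mat"
  assumes M: "M \<in> carrier_mat n n" and \<rho>: "\<rho> \<subseteq> {0..<n}"
    and v: "v \<in> carrier_vec (card \<rho>)" and vf: "\<And>p. p < card \<rho> \<Longrightarrow> v $ p = f (pick \<rho> p)"
  shows "v \<noteq> 0\<^sub>v (card \<rho>) \<and>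
      (\<forall>q<card \<rho>. (\<Sum>p = 0..<card \<rho>. v $ p * submatrix M \<rho> \<rho> $$ (p, q)) = z * v $ q)
    \<longleftrightarrow> left_eigenvector_on \<rho> (\<lambda>a b. M $$ (a, b)) z f"
proof -
  define k where "k = card \<rho>"
  have bij: "bij_betw (pick \<rho>) {0..<k} \<rho>"
    unfolding k_def using bij_betw_pick[OF finite_subset[OF \<rho> finite_atLeastLessThan]] .
  then have img: "pick \<rho> ` {0..<k} = \<rho>"
    by (simp add: bij_betw_def)
  have "v \<noteq> 0\<^sub>v k \<longleftrightarrow> (\<exists>p\<in>{0..<k}. f (pick \<rho> p) \<noteq> 0)"
    using v vf by (auto simp: vec_eq_iff k_def)
  also have "\<dots> \<longleftrightarrow> (\<exists>a\<in>pick \<rho> ` {0..<k}. f a \<noteq> 0)"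
    by simp
  finally have nonzero: "v \<noteq> 0\<^sub>v k \<longleftrightarrow> (\<exists>a\<in>\<rho>. f a \<noteq> 0)"
    unfolding img .
  have column: "(\<Sum>p = 0..<k. v $ p * submatrix M \<rho> \<rho> $$ (p, q)) = (\<Sum>a\<in>\<rho>. f a * M $$ (a, pick \<rho> q))"
    if "q < k" for q
  proof -
    have "(\<Sum>p = 0..<k. v $ p * submatrix M \<rho> \<rho> $$ (p, q))
        = (\<Sum>p = 0..<k. f (pick \<rho> p) * M $$ (pick \<rho> p, pick \<rho> q))"
      using that unfolding k_def by (intro sum.cong) (simp_all add: vf submatrix_index_pick[OF M \<rho>])
    also have "\<dots> = (\<Sum>a\<in>\<rho>. f a * M $$ (a, pick \<rho> q))"
      by (rule sum.reindex_bij_betw[OF bij])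
    finally show ?thesis .
  qed
  have "(\<forall>q<k. (\<Sum>p = 0..<k. v $ p * submatrix M \<rho> \<rho> $$ (p, q)) = z * v $ q)
      \<longleftrightarrow> (\<forall>q<k. (\<Sum>a\<in>\<rho>. f a * M $$ (a, pick \<rho> q)) = z * f (pick \<rho> q))"
    using column by (simp add: vf k_def)
  also have "\<dots> \<longleftrightarrow> (\<forall>b\<in>pick \<rho> ` {0..<k}. (\<Sum>a\<in>\<rho>. f a * M $$ (a, b)) = z * f b)"
    by auto
  finally have eigen: "(\<forall>q<k. (\<Sum>p = 0..<k. v $ p * submatrix M \<rho> \<rho> $$ (p, q)) = z * v $ q)
      \<longleftrightarrow> (\<forall>b\<in>\<rho>. (\<Sum>a\<in>\<rho>. f a * M $$ (a, b)) = z * f b)"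
    unfolding img .
  show ?thesis
    unfolding k_def[symmetric] by (simp only: left_eigenvector_on_def nonzero eigen)
qed

lemma eigenvalue_submatrix_iff_left_eigenvector_on:
  fixes M :: "'a :: field mat"
  assumes M: "M \<in> carrier_mat n n" and \<rho>: "\<rho> \<subseteq> {0..<n}"
  shows "eigenvalue (submatrix M \<rho> \<rho>) z \<longleftrightarrow> (\<exists>f. left_eigenvector_on \<rho> (\<lambda>a b. M $$ (a, b)) z f)"
  unfolding eigenvalue_iff_left_eigenvector[OF submatrix_carrier_mat[OF assms]]
proof
  assume "\<exists>v\<in>carrier_vec (card \<rho>). v \<noteq> 0\<^sub>v (card \<rho>) \<and>
    (\<forall>q<card \<rho>. (\<Sum>p = 0..<card \<rho>. v $ p * submatrix M \<rho> \<rho> $$ (p, q)) = z * v $ q)"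
  then obtain v where v: "v \<in> carrier_vec (card \<rho>)" and eigen: "v \<noteq> 0\<^sub>v (card \<rho>) \<and>
    (\<forall>q<card \<rho>. (\<Sum>p = 0..<card \<rho>. v $ p * submatrix M \<rho> \<rho> $$ (p, q)) = z * v $ q)"
    by blast
  define f where "f a = v $ card {x \<in> \<rho>. x < a}" for a
  have vf: "v $ p = f (pick \<rho> p)" if "p < card \<rho>" for p
    using that by (simp add: f_def card_pick)
  have "left_eigenvector_on \<rho> (\<lambda>a b. M $$ (a, b)) z f"
    using left_eigenvector_on_iff_submatrix[OF M \<rho> v vf] eigen by (rule iffD1)
  then show "\<exists>f. left_eigenvector_on \<rho> (\<lambda>a b. M $$ (a, b)) z f"
    by (rule exI[of _ f])
next
  assume "\<exists>f. left_eigenvector_on \<rho> (\<lambda>a b. M $$ (a, b)) z f"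
  then obtain f where f: "left_eigenvector_on \<rho> (\<lambda>a b. M $$ (a, b)) z f"
    by blast
  define v where "v = vec (card \<rho>) (\<lambda>p. f (pick \<rho> p))"
  have v: "v \<in> carrier_vec (card \<rho>)"
    unfolding v_def by simp
  have vf: "v $ p = f (pick \<rho> p)" if "p < card \<rho>" for p
    using that by (simp add: v_def)
  have "v \<noteq> 0\<^sub>v (card \<rho>) \<and>
    (\<forall>q<card \<rho>. (\<Sum>p = 0..<card \<rho>. v $ p * submatrix M \<rho> \<rho> $$ (p, q)) = z * v $ q)"
    using left_eigenvector_on_iff_submatrix[OF M \<rho> v vf] f by (rule iffD2)
  then show "\<exists>v\<in>carrier_vec (card \<rho>). v \<noteq> 0\<^sub>v (card \<rho>) \<and>
    (\<forall>q<card \<rho>. (\<Sum>p = 0..<card \<rho>. v $ p * submatrix M \<rho> \<rho> $$ (p, q)) = z * v $ q)"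
    using v by (rule bexI[of _ v])
qed

lemma left_eigenvector_on_sum_eq_0:
  fixes M :: "'b \<Rightarrow> 'b \<Rightarrow> 'a :: field"
  assumes rows: "\<And>a. a \<in> \<rho> \<Longrightarrow> (\<Sum>b\<in>\<rho>. M a b) = c"
    and f: "left_eigenvector_on \<rho> M z f" and "z \<noteq> c"
  shows "(\<Sum>a\<in>\<rho>. f a) = 0"
proof -
  have "z * (\<Sum>a\<in>\<rho>. f a) = (\<Sum>b\<in>\<rho>. \<Sum>a\<in>\<rho>. f a * M a b)"
    using f unfolding left_eigenvector_on_def by (simp add: sum_distrib_left)
  also have "\<dots> = (\<Sum>a\<in>\<rho>. f a * (\<Sum>b\<in>\<rho>. M a b))"
    by (subst sum.swap) (simp add: sum_distrib_left)
  also have "\<dots> = c * (\<Sum>a\<in>\<rho>. f a)"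
    using rows by (simp add: sum_distrib_left mult.commute)
  finally have "(z - c) * (\<Sum>a\<in>\<rho>. f a) = 0"
    by (simp add: left_diff_distrib)
  with \<open>z \<noteq> c\<close> show ?thesis by simp
qed

lemma left_eigenvector_on_extend_zero:
  fixes M :: "'b \<Rightarrow> 'b \<Rightarrow> 'a :: field"
  assumes "finite \<tau>" "finite \<omega>" "\<tau> \<inter> \<omega> = {}"
    and f: "left_eigenvector_on \<tau> M z f" and sum_f: "(\<Sum>a\<in>\<tau>. f a) = 0"
    and cols: "\<And>b. b \<in> \<omega> \<Longrightarrow> \<exists>r. \<forall>a\<in>\<tau>. M a b = r"
  shows "left_eigenvector_on (\<tau> \<union> \<omega>) M z (\<lambda>a. if a \<in> \<tau> then f a else 0)"
proof -
  have restrict: "(\<Sum>a\<in>\<tau> \<union> \<omega>. (if a \<in> \<tau> then f a else 0) * M a b) = (\<Sum>a\<in>\<tau>. f a * M a b)" for b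
  proof -
    have "(\<Sum>a\<in>\<omega>. (if a \<in> \<tau> then f a else 0) * M a b) = 0"
      using assms(3) by (intro sum.neutral) auto
    then show ?thesis
      using assms(1-3) by (simp add: sum.union_disjoint cong: sum.cong)
  qed
  have "(\<Sum>a\<in>\<tau>. f a * M a b) = z * (if b \<in> \<tau> then f b else 0)" if b: "b \<in> \<tau> \<union> \<omega>" for b
  proof (cases "b \<in> \<tau>")
    case True
    then show ?thesis using f by (simp add: left_eigenvector_on_def)
  next
    case False
    then obtain r where "\<forall>a\<in>\<tau>. M a b = r" using b cols by blast
    then have "(\<Sum>a\<in>\<tau>. f a * M a b) = (\<Sum>a\<in>\<tau>. f a) * r"
      by (simp add: sum_distrib_right)
    with sum_f False show ?thesis by simp
  qed
  moreover have "\<exists>a\<in>\<tau> \<union> \<omega>. (if a \<in> \<tau> then f a else 0) \<noteq> 0"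
    using f by (auto simp: left_eigenvector_on_def)
  ultimately show ?thesis
    unfolding left_eigenvector_on_def restrict by simp
qed

lemma det_nonzero_imp_invertible_mat:
  assumes "A \<in> carrier_mat n n" "det A \<noteq> (0 :: 'a :: field)"
  shows "invertible_mat A"
proof -
  obtain B where "B \<in> carrier_mat n n" "B * A = 1\<^sub>m n" "A * B = 1\<^sub>m n"
    using det_non_zero_imp_unit[OF assms, of "()"] unfolding Units_def ring_mat_def by auto
  then show ?thesis
    using assms(1) unfolding invertible_mat_def inverts_mat_def by auto
qed

lemma mat_inv_left_inverse:
  assumes "A \<in> carrier_mat n n" "invertible_mat A"
  shows "mat_inv A \<in> carrier_mat n n" "mat_inv A * A = 1\<^sub>m n"
proof -
  obtain B where AB: "A * B = 1\<^sub>m n" and BA: "B * A = 1\<^sub>m (dim_row B)"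
    using assms unfolding invertible_mat_def inverts_mat_def by auto
  then have "B \<in> carrier_mat n n"
    using assms(1) by (metis carrier_matD carrier_matI index_mult_mat(2,3) index_one_mat(2,3))
  with AB BA assms(1)
  have "\<exists>B. B \<in> carrier_mat (dim_row A) (dim_row A) \<and> inverts_mat A B \<and> inverts_mat B A"
    unfolding inverts_mat_def by auto
  then have "mat_inv A \<in> carrier_mat (dim_row A) (dim_row A) \<and> inverts_mat (mat_inv A) A"
    unfolding mat_inv_def by (rule someI2_ex) blast
  then show "mat_inv A \<in> carrier_mat n n" "mat_inv A * A = 1\<^sub>m n"
    using assms(1) unfolding inverts_mat_def by auto
qed

lemma mat_inv_mult_eigenvector:
  assumes A: "A \<in> carrier_mat n n" "invertible_mat A" and v: "v \<in> carrier_vec n"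
    and Av: "A *\<^sub>v v = c \<cdot>\<^sub>v v" and "c \<noteq> 0"
  shows "mat_inv A *\<^sub>v v = (1 / c) \<cdot>\<^sub>v v"
proof -
  have "v = (mat_inv A * A) *\<^sub>v v"
    using mat_inv_left_inverse[OF A] v by simp
  also have "\<dots> = mat_inv A *\<^sub>v (A *\<^sub>v v)"
    using mat_inv_left_inverse(1)[OF A] A(1) v by (rule assoc_mult_mat_vec)
  also have "\<dots> = c \<cdot>\<^sub>v (mat_inv A *\<^sub>v v)"
    using mat_inv_left_inverse(1)[OF A] v by (simp add: Av mult_mat_vec)
  finally have "(1 / c) \<cdot>\<^sub>v v = (1 / c) \<cdot>\<^sub>v (c \<cdot>\<^sub>v (mat_inv A *\<^sub>v v))"
    by simp
  with \<open>c \<noteq> 0\<close> show ?thesis by (simp add: smult_smult_assoc)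
qed

lemma I_minus_W_eq_submatrix:
  assumes W: "W \<in> carrier_mat n n" and \<rho>: "\<rho> \<subseteq> {0..<n}"
  shows "I_minus_W W \<rho> = submatrix (1\<^sub>m n - W) \<rho> \<rho>"
proof -
  have IW: "1\<^sub>m n - W \<in> carrier_mat n n" using W by (rule minus_carrier_mat)
  have inj: "inj_on (pick \<rho>) {0..<card \<rho>}"
    using bij_betw_pick[OF finite_subset[OF \<rho> finite_atLeastLessThan]] by (simp add: bij_betw_def)
  have "pick \<rho> p < n" if "p < card \<rho>" for p
    using that pick_in_set \<rho> by fastforce
  then show ?thesis
    unfolding I_minus_W_def principal_sub_def
    using submatrix_carrier_mat[OF W \<rho>] submatrix_carrier_mat[OF IW \<rho>] W
    by (intro eq_matI) (auto simp: submatrix_index_pick[OF W \<rho>] submatrix_index_pick[OF IW \<rho>]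
        inj_on_eq_iff[OF inj])
qed

lemma I_minus_W_carrier_mat:
  assumes "W \<in> carrier_mat n n" "\<rho> \<subseteq> {0..<n}"
  shows "I_minus_W W \<rho> \<in> carrier_mat (card \<rho>) (card \<rho>)"
  unfolding I_minus_W_eq_submatrix[OF assms]
  by (rule submatrix_carrier_mat) (use assms in auto)

lemma eigenvalue_I_minus_W_iff_left_eigenvector_on:
  assumes W: "W \<in> carrier_mat n n" and \<rho>: "\<rho> \<subseteq> {0..<n}"
  shows "eigenvalue (map_mat complex_of_real (I_minus_W W \<rho>)) z \<longleftrightarrow>
    (\<exists>f. left_eigenvector_on \<rho> (\<lambda>a b. complex_of_real ((1\<^sub>m n - W) $$ (a, b))) z f)"
proof -
  have IW: "1\<^sub>m n - W \<in> carrier_mat n n" using W by (rule minus_carrier_mat)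
  then have IW': "map_mat complex_of_real (1\<^sub>m n - W) \<in> carrier_mat n n" by simp
  have "map_mat complex_of_real (I_minus_W W \<rho>) = submatrix (map_mat complex_of_real (1\<^sub>m n - W)) \<rho> \<rho>"
    unfolding I_minus_W_eq_submatrix[OF W \<rho>] by (rule map_mat_submatrix[OF IW \<rho>])
  moreover have "left_eigenvector_on \<rho> (\<lambda>a b. map_mat complex_of_real (1\<^sub>m n - W) $$ (a, b)) z f
      \<longleftrightarrow> left_eigenvector_on \<rho> (\<lambda>a b. complex_of_real ((1\<^sub>m n - W) $$ (a, b))) z f" for f
  proof (rule left_eigenvector_on_cong)
    fix a b assume "a \<in> \<rho>" "b \<in> \<rho>"
    then have "a < n" "b < n" using \<rho> by auto
    then show "map_mat complex_of_real (1\<^sub>m n - W) $$ (a, b) = complex_of_real ((1\<^sub>m n - W) $$ (a, b))"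
      using carrier_matD[OF W] by simp
  qed
  ultimately show ?thesis
    using eigenvalue_submatrix_iff_left_eigenvector_on[OF IW' \<rho>] by simp
qed

lemma fp_vec_eq_if_constant_row_sums:
  assumes W: "W \<in> carrier_mat n n" and \<rho>: "\<rho> \<subseteq> {0..<n}"
    and inv: "invertible_mat (I_minus_W W \<rho>)"
    and rows: "\<And>a. a \<in> \<rho> \<Longrightarrow> (\<Sum>b\<in>\<rho>. (1\<^sub>m n - W) $$ (a, b)) = c" and "c \<noteq> 0"
  shows "fp_vec W \<theta> \<rho> = (\<theta> / c) \<cdot>\<^sub>v vec (card \<rho>) (\<lambda>_. 1)"
proof -
  have A: "I_minus_W W \<rho> \<in> carrier_mat (card \<rho>) (card \<rho>)"
    by (rule I_minus_W_carrier_mat[OF W \<rho>])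
  have IW: "1\<^sub>m n - W \<in> carrier_mat n n" using W by (rule minus_carrier_mat)
  have "I_minus_W W \<rho> *\<^sub>v vec (card \<rho>) (\<lambda>_. 1) = c \<cdot>\<^sub>v vec (card \<rho>) (\<lambda>_. 1)"
    unfolding I_minus_W_eq_submatrix[OF W \<rho>] using IW \<rho> rows by (rule submatrix_mult_ones_vec)
  then have "mat_inv (I_minus_W W \<rho>) *\<^sub>v vec (card \<rho>) (\<lambda>_. 1) = (1 / c) \<cdot>\<^sub>v vec (card \<rho>) (\<lambda>_. 1)"
    using mat_inv_mult_eigenvector[OF A inv] \<open>c \<noteq> 0\<close> by simp
  then show ?thesis
    unfolding fp_vec_def using A by (simp add: smult_smult_assoc)
qed

lemma ctln_W_carrier_mat: "ctln_W n E \<epsilon> \<delta> \<in> carrier_mat n n"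
  unfolding ctln_W_def by simp

lemma one_minus_ctln_W_index:
  assumes "a < n" "b < n"
  shows "(1\<^sub>m n - ctln_W n E \<epsilon> \<delta>) $$ (a, b) = (if a = b then 1 else if E b a then 1 - \<epsilon> else 1 + \<delta>)"
  using assms by (simp add: ctln_W_def)

lemma ctln_row_sum:
  assumes \<tau>: "\<tau> \<subseteq> {0..<n}" and a: "a \<in> \<tau>" and "\<not> E a a"
  shows "(\<Sum>b\<in>\<tau>. (1\<^sub>m n - ctln_W n E \<epsilon> \<delta>) $$ (a, b))
    = 1 + (1 + \<delta>) * (real (card \<tau>) - 1) - (\<epsilon> + \<delta>) * real (card {b \<in> \<tau>. E b a})"
proof -
  have fin: "finite \<tau>" using finite_subset[OF \<tau> finite_atLeastLessThan] .
  have "a < n" using a \<tau> by auto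
  then have diag: "(1\<^sub>m n - ctln_W n E \<epsilon> \<delta>) $$ (a, a) = 1"
    by (simp add: one_minus_ctln_W_index)
  have off_diag: "(1\<^sub>m n - ctln_W n E \<epsilon> \<delta>) $$ (a, b) = (1 + \<delta>) - (if E b a then \<epsilon> + \<delta> else 0)"
    if "b \<in> \<tau> - {a}" for b
  proof -
    have "b < n" "a \<noteq> b" using that \<tau> by auto
    with \<open>a < n\<close> show ?thesis by (simp add: one_minus_ctln_W_index)
  qed
  have in_nbrs: "{b \<in> \<tau> - {a}. E b a} = {b \<in> \<tau>. E b a}" using \<open>\<not> E a a\<close> by auto
  have card_pos: "1 \<le> card \<tau>" using fin a by (auto simp: Suc_le_eq card_gt_0_iff)
  have "(\<Sum>b\<in>\<tau>. (1\<^sub>m n - ctln_W n E \<epsilon> \<delta>) $$ (a, b))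
      = 1 + (\<Sum>b\<in>\<tau> - {a}. (1\<^sub>m n - ctln_W n E \<epsilon> \<delta>) $$ (a, b))"
    by (simp only: sum.remove[OF fin a] diag)
  also have "\<dots> = 1 + (\<Sum>b\<in>\<tau> - {a}. (1 + \<delta>) - (if E b a then \<epsilon> + \<delta> else 0))"
    using off_diag by simp
  also have "\<dots> = 1 + (1 + \<delta>) * real (card (\<tau> - {a})) - (\<epsilon> + \<delta>) * real (card {b \<in> \<tau> - {a}. E b a})"
    using fin by (simp add: sum_subtractf sum.inter_filter[symmetric])
  also have "\<dots> = 1 + (1 + \<delta>) * (real (card \<tau>) - 1) - (\<epsilon> + \<delta>) * real (card {b \<in> \<tau>. E b a})"
    unfolding in_nbrs using fin a card_pos by (simp add: card_Diff_singleton of_nat_diff)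
  finally show ?thesis .
qed

lemma ctln_uniform_in_degree_row_sums:
  assumes "simple_digraph n E" "legal_params \<epsilon> \<delta>" and \<tau>: "\<tau> \<subseteq> {0..<n}" "\<tau> \<noteq> {}"
    and "uniform_in_degree E \<tau>"
  shows "\<exists>c > 0. \<forall>a\<in>\<tau>. (\<Sum>b\<in>\<tau>. (1\<^sub>m n - ctln_W n E \<epsilon> \<delta>) $$ (a, b)) = c"
proof -
  obtain d where d: "\<And>a. a \<in> \<tau> \<Longrightarrow> card {b \<in> \<tau>. E b a} = d"
    using assms(5) unfolding uniform_in_degree_def by blast
  have loopfree: "\<not> E a a" for a
    using assms(1) unfolding simple_digraph_def by blast
  have fin: "finite \<tau>" using finite_subset[OF \<tau>(1) finite_atLeastLessThan] .
  obtain a0 where a0: "a0 \<in> \<tau>" using \<tau>(2) by blast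
  have card_pos: "1 \<le> card \<tau>" using fin a0 by (auto simp: Suc_le_eq card_gt_0_iff)
  have "real d \<le> real (card (\<tau> - {a0}))"
    unfolding d[OF a0, symmetric] using fin loopfree by (auto intro: card_mono)
  also have "\<dots> = real (card \<tau>) - 1"
    using fin a0 card_pos by (simp add: card_Diff_singleton of_nat_diff)
  finally have d_le: "real d \<le> real (card \<tau>) - 1" .
  have "\<delta> / (\<delta> + 1) < 1" "0 < \<epsilon>" "0 < \<delta>" "\<epsilon> < \<delta> / (\<delta> + 1)"
    using assms(2) unfolding legal_params_def by auto
  then have "0 < \<epsilon>" "\<epsilon> < 1" "0 < \<delta>" by linarith+
  with d_le have "(\<epsilon> + \<delta>) * real d \<le> (\<epsilon> + \<delta>) * (real (card \<tau>) - 1)"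
    "0 \<le> (1 - \<epsilon>) * (real (card \<tau>) - 1)"
    using card_pos by (auto intro!: mult_left_mono)
  then have "0 < 1 + (1 + \<delta>) * (real (card \<tau>) - 1) - (\<epsilon> + \<delta>) * real d"
    by (simp add: algebra_simps)
  moreover have "(\<Sum>b\<in>\<tau>. (1\<^sub>m n - ctln_W n E \<epsilon> \<delta>) $$ (a, b))
      = 1 + (1 + \<delta>) * (real (card \<tau>) - 1) - (\<epsilon> + \<delta>) * real d" if "a \<in> \<tau>" for a
    using ctln_row_sum[where E = E and \<epsilon> = \<epsilon> and \<delta> = \<delta>, OF \<tau>(1) that loopfree] d[OF that] by simp
  ultimately show ?thesis by blast
qed

lemma ctln_simply_added_column_const:
  assumes "simply_added E \<omega> \<tau>" "\<tau> \<subseteq> {0..<n}" "\<omega> \<subseteq> {0..<n}" "\<tau> \<inter> \<omega> = {}" "b \<in> \<omega>"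
  shows "\<exists>r. \<forall>a\<in>\<tau>. (1\<^sub>m n - ctln_W n E \<epsilon> \<delta>) $$ (a, b) = r"
proof -
  have entry: "(1\<^sub>m n - ctln_W n E \<epsilon> \<delta>) $$ (a, b) = (if E b a then 1 - \<epsilon> else 1 + \<delta>)" if "a \<in> \<tau>" for a
  proof -
    have "a < n" "b < n" "a \<noteq> b" using that assms(2-5) by auto
    then show ?thesis by (simp add: one_minus_ctln_W_index)
  qed
  from assms(1,5) consider "\<forall>a\<in>\<tau>. E b a" | "\<forall>a\<in>\<tau>. \<not> E b a"
    unfolding simply_added_def by blast
  then show ?thesis
    by cases (use entry in auto)
qed

theorem corollary1:
  fixes n :: nat and E :: "nat \<Rightarrow> nat \<Rightarrow> bool" and \<epsilon> \<delta> \<theta> :: real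
    and \<tau> \<omega> :: "nat set"
  assumes "simple_digraph n E"
    and "legal_params \<epsilon> \<delta>" and "\<theta> > 0"
    and "nondegenerate n (ctln_W n E \<epsilon> \<delta>) \<theta>"
    and "\<tau> \<subseteq> {0..<n}" and "\<omega> \<subseteq> {0..<n}"
    and "\<tau> \<noteq> {}" and "\<omega> \<noteq> {}" and "\<tau> \<inter> \<omega> = {}"
    and "simply_added E \<omega> \<tau>"
    and "uniform_in_degree E \<tau>"
    and "\<not> stable_motif (ctln_W n E \<epsilon> \<delta>) \<theta> \<tau>"
  shows "\<not> stable_motif (ctln_W n E \<epsilon> \<delta>) \<theta> (\<tau> \<union> \<omega>)"
proof -
  let ?W = "ctln_W n E \<epsilon> \<delta>"
  let ?M = "\<lambda>a b. complex_of_real ((1\<^sub>m n - ?W) $$ (a, b))"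
  have W: "?W \<in> carrier_mat n n" by (rule ctln_W_carrier_mat)
  obtain c where "c > 0" and rows: "\<And>a. a \<in> \<tau> \<Longrightarrow> (\<Sum>b\<in>\<tau>. (1\<^sub>m n - ?W) $$ (a, b)) = c"
    using ctln_uniform_in_degree_row_sums[OF assms(1,2,5,7,11)] by blast
  have "det (I_minus_W ?W \<tau>) \<noteq> 0"
    using assms(4,5,7) unfolding nondegenerate_def by blast
  then have inv: "invertible_mat (I_minus_W ?W \<tau>)"
    by (rule det_nonzero_imp_invertible_mat[OF I_minus_W_carrier_mat[OF W assms(5)]])
  have "fp_vec ?W \<theta> \<tau> = (\<theta> / c) \<cdot>\<^sub>v vec (card \<tau>) (\<lambda>_. 1)"
    using fp_vec_eq_if_constant_row_sums[OF W assms(5) inv rows] \<open>c > 0\<close> by simp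
  with assms(12) inv \<open>\<theta> > 0\<close> \<open>c > 0\<close> obtain z
    where z: "eigenvalue (map_mat complex_of_real (I_minus_W ?W \<tau>)) z" "Re z \<le> 0"
    unfolding stable_motif_def by (auto simp: not_less)
  then obtain f where f: "left_eigenvector_on \<tau> ?M z f"
    using eigenvalue_I_minus_W_iff_left_eigenvector_on[OF W assms(5)] by blast
  have "z \<noteq> complex_of_real c"
    using z(2) \<open>c > 0\<close> by auto
  then have "(\<Sum>a\<in>\<tau>. f a) = 0"
    using rows by (intro left_eigenvector_on_sum_eq_0[OF _ f]) (simp flip: of_real_sum)
  moreover have "\<exists>r. \<forall>a\<in>\<tau>. ?M a b = r" if "b \<in> \<omega>" for b
    using ctln_simply_added_column_const[OF assms(10,5,6,9) that] by metis
  ultimately have "left_eigenvector_on (\<tau> \<union> \<omega>) ?M z (\<lambda>a. if a \<in> \<tau> then f a else 0)"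
    using finite_subset[OF assms(5) finite_atLeastLessThan] finite_subset[OF assms(6) finite_atLeastLessThan]
    by (intro left_eigenvector_on_extend_zero[OF _ _ assms(9) f]) auto
  then have "eigenvalue (map_mat complex_of_real (I_minus_W ?W (\<tau> \<union> \<omega>))) z"
    using eigenvalue_I_minus_W_iff_left_eigenvector_on[OF W] assms(5,6) by blast
  with z(2) show ?thesis
    unfolding stable_motif_def by (auto simp: not_less)
qed

end
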